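(* Let $0<\alpha\le1$ and let $v,w:[0,T]\to L^2(\Omega)$ be (sufficiently integrable) functions. Then for $t\in[0,T]$, \[ \mathcal{I}\bigl(\langle\mathcal{I}^{1-\alpha}(v+w),v+w\rangle\bigr)(t)\le(1+\alpha^{-1})\Bigl(\mathcal{I}\bigl(\langle\mathcal{I}^{1-\alpha}v,v\rangle\bigr)(t)+\mathcal{I}\bigl(\langle\mathcal{I}^{1-\alpha}w,w\rangle\bigr)(t)\Bigr). \]
   Context: $\langle\cdot,\cdot\rangle$ is the $L^2(\Omega)$ inner product. $\mathcal{I}g(t)=\int_0^tg(s)\,ds$; for $\beta>0$, $\omega_\beta(t)=t^{\beta-1}/\Gamma(\beta)$ and $\mathcal{I}^\beta v(t)=\int_0^t\omega_\beta(t-s)v(s)\,ds$. *)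

theory Defs
  imports "HOL-Analysis.Analysis"
begin

definition omega :: "real \<Rightarrow> real \<Rightarrow> real" where
  "omega \<beta> t = t powr (\<beta> - 1) / Gamma \<beta>"

definition Iint :: "(real \<Rightarrow> real) \<Rightarrow> real \<Rightarrow> real" where
  "Iint g t = set_lebesgue_integral lborel {0..t} g"

definition frac_int :: "real \<Rightarrow> (real \<Rightarrow> 'a::{banach, second_countable_topology}) \<Rightarrow> real \<Rightarrow> 'a" where
  "frac_int \<beta> v t =
     (if \<beta> = 0 then v t
      else set_lebesgue_integral lborel {0..t} (\<lambda>s. omega \<beta> (t - s) *\<^sub>R v s))"

end

(*
  Let b = 1 - alpha.  For 0 < b < 1 and U the restriction of u to [0, t], the integral of
  <I^b u, u> over [0, t] is the quadratic form

    Q(U) = double integral over r < s of omega_b(s - r) <U r, U s>.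

  Symmetrising, 2 Q(U) is the double integral of omega_b(|s - r|) <U r, U s>.  With
  k(x, r) = (x - r)_+^(b/2 - 1), the substitution x = s + (s - r) y gives

    integral of k(x, r) k(x, s) dx = B(b/2, 1 - b) |s - r|^(b - 1),

  so by Fubini 2 Q(U) is a positive multiple of the integral over x of
  |integral of k(x, r) U r dr|^2, hence Q(U) >= 0.  A nonnegative quadratic form satisfies the
  parallelogram law Q(U + V) + Q(U - V) = 2 Q(U) + 2 Q(V), so Q(U + V) <= 2 (Q(U) + Q(V)), and
  2 <= 1 + 1/alpha.  For alpha = 1 the form is the integral of |U|^2 and the same argument applies.
*)
theory Submission
  imports Defs
begin

section \<open>Kernels\<close>

lemma nn_integral_powr_from_0_finite:
  fixes a c :: real
  assumes "a > -1" "c \<ge> 0"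
  shows "(\<integral>\<^sup>+x. ennreal (indicator {0..c} x * x powr a) \<partial>lborel) < \<infinity>"
proof -
  have "integral\<^sup>N lborel (\<lambda>x. indicator {0..c} x * x powr a) = c powr (a + 1) / (a + 1)"
    by (rule nn_integral_has_integral_lebesgue) (auto intro: has_integral_powr_from_0 assms)
  then show ?thesis by simp
qed

lemma nn_integral_powr_to_inf_finite:
  fixes a c :: real
  assumes "a < -1" "c > 0"
  shows "(\<integral>\<^sup>+x. ennreal (indicator {c..} x * x powr a) \<partial>lborel) < \<infinity>"
proof -
  have "integral\<^sup>N lborel (\<lambda>x. indicator {c..} x * x powr a) = - (c powr (a + 1)) / (a + 1)"
    by (rule nn_integral_has_integral_lebesgue[OF _ has_integral_powr_to_inf[OF assms]])
       (use assms in auto)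
  then show ?thesis by simp
qed

lemma omega_nonneg: "0 < b \<Longrightarrow> omega b \<tau> \<ge> 0"
  by (simp add: omega_def)

lemma omega_measurable[measurable (raw)]:
  assumes [measurable]: "f \<in> borel_measurable M"
  shows "(\<lambda>z. omega b (f z)) \<in> borel_measurable M"
  unfolding omega_def by measurable

lemma nn_integral_omega_abs_finite:
  assumes "0 < b"
  shows "(\<integral>\<^sup>+\<tau>. ennreal (indicator {-t..t} \<tau> * omega b \<bar>\<tau>\<bar>) \<partial>lborel) < \<infinity>"
proof -
  define P where "P \<tau> = ennreal (indicator {0..t} \<tau> * omega b \<tau>)" for \<tau> :: real
  have [measurable]: "P \<in> borel_measurable borel"
    unfolding P_def by measurable
  have P_finite: "(\<integral>\<^sup>+\<tau>. P \<tau> \<partial>lborel) < \<infinity>"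
  proof (cases "0 \<le> t")
    case True
    have "(\<integral>\<^sup>+\<tau>. P \<tau> \<partial>lborel)
        = ennreal (1 / Gamma b) * (\<integral>\<^sup>+\<tau>. ennreal (indicator {0..t} \<tau> * \<tau> powr (b - 1)) \<partial>lborel)"
      using assms by (subst nn_integral_cmult[symmetric])
        (auto intro!: nn_integral_cong simp: P_def omega_def simp flip: ennreal_mult)
    then show ?thesis
      using nn_integral_powr_from_0_finite[of "b - 1" t] True assms by (simp add: ennreal_mult_less_top)
  qed (simp add: P_def)
  have "(\<integral>\<^sup>+\<tau>. ennreal (indicator {-t..t} \<tau> * omega b \<bar>\<tau>\<bar>) \<partial>lborel) \<le> (\<integral>\<^sup>+\<tau>. P \<tau> + P (- \<tau>) \<partial>lborel)"
    by (intro nn_integral_mono) (auto simp: P_def indicator_def abs_if)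
  also have "\<dots> = (\<integral>\<^sup>+\<tau>. P \<tau> \<partial>lborel) + (\<integral>\<^sup>+\<tau>. P (- \<tau>) \<partial>lborel)"
    by (rule nn_integral_add) auto
  also have "(\<integral>\<^sup>+\<tau>. P (- \<tau>) \<partial>lborel) = (\<integral>\<^sup>+\<tau>. P \<tau> \<partial>lborel)"
    using nn_integral_real_affine[of P "- 1" 0] by simp
  also have "(\<integral>\<^sup>+\<tau>. P \<tau> \<partial>lborel) + (\<integral>\<^sup>+\<tau>. P \<tau> \<partial>lborel) < \<infinity>"
    using P_finite by simp
  finally show ?thesis .
qed

lemma omega_norm_product_le:
  fixes U :: "real \<Rightarrow> 'a::real_normed_vector"
  assumes "0 < b" and U: "\<And>r. r \<notin> {0..t} \<Longrightarrow> U r = 0"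
  shows "omega b \<bar>s - r\<bar> * (norm (U r) * norm (U s))
           \<le> indicator {-t..t} (s - r) * omega b \<bar>s - r\<bar> * ((norm (U r))\<^sup>2 + (norm (U s))\<^sup>2)"
proof (cases "U r = 0 \<or> U s = 0")
  case True
  then show ?thesis
    using assms(1) by (auto simp: omega_nonneg)
next
  case False
  then have "r \<in> {0..t}" "s \<in> {0..t}"
    using U by blast+
  then have "s - r \<in> {-t..t}"
    by auto
  have "norm (U r) * norm (U s) \<le> (norm (U r))\<^sup>2 + (norm (U s))\<^sup>2"
    by (smt (verit) norm_ge_zero power2_eq_square mult_mono sum_squares_bound)
  then show ?thesis
    using \<open>s - r \<in> {-t..t}\<close> assms(1) by (simp add: omega_nonneg mult_left_mono)
qed

definition frac_kernel :: "real \<Rightarrow> real \<Rightarrow> real \<Rightarrow> real" where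
  "frac_kernel b s r = (if r < s then omega b (s - r) else 0)"

lemma frac_kernel_measurable[measurable (raw)]:
  assumes [measurable]: "f \<in> borel_measurable M" "h \<in> borel_measurable M"
  shows "(\<lambda>z. frac_kernel b (f z) (h z)) \<in> borel_measurable M"
  unfolding frac_kernel_def by measurable

lemma abs_frac_kernel_le: "0 < b \<Longrightarrow> \<bar>frac_kernel b s r\<bar> \<le> omega b \<bar>s - r\<bar>"
  by (simp add: frac_kernel_def omega_nonneg)

lemma omega_abs_eq_frac_kernel_sum: "omega b \<bar>s - r\<bar> = frac_kernel b s r + frac_kernel b r s"
  by (cases r s rule: linorder_cases) (simp_all add: frac_kernel_def omega_def abs_minus_commute)

definition trunc_kernel :: "real \<Rightarrow> real \<Rightarrow> real \<Rightarrow> real" where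
  "trunc_kernel g x r = (if r < x then (x - r) powr (g - 1) else 0)"

text \<open>This is the Beta integral \<open>B(g, 1 - 2 g)\<close>, finite exactly for \<open>0 < g < 1/2\<close>.\<close>
definition gram_constant :: "real \<Rightarrow> ennreal" where
  "gram_constant g =
     (\<integral>\<^sup>+y. ennreal (indicator {0<..} y * (y powr (g - 1) * (1 + y) powr (g - 1))) \<partial>lborel)"

lemma trunc_kernel_nonneg: "trunc_kernel g x r \<ge> 0"
  by (simp add: trunc_kernel_def)

lemma trunc_kernel_measurable[measurable (raw)]:
  assumes [measurable]: "f \<in> borel_measurable M" "h \<in> borel_measurable M"
  shows "(\<lambda>z. trunc_kernel g (f z) (h z)) \<in> borel_measurable M"
  unfolding trunc_kernel_def by measurable

lemma gram_constant_finite: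
  assumes "0 < g" "g < 1/2"
  shows "gram_constant g < \<infinity>"
proof -
  have "gram_constant g \<le> (\<integral>\<^sup>+y. ennreal (indicator {0..1} y * y powr (g - 1))
                              + ennreal (indicator {1..} y * y powr (2 * g - 2)) \<partial>lborel)"
    unfolding gram_constant_def
  proof (intro nn_integral_mono)
    fix y :: real
    consider "y \<le> 0" | "0 < y" "y \<le> 1" | "1 < y" by linarith
    then show "ennreal (indicator {0<..} y * (y powr (g - 1) * (1 + y) powr (g - 1)))
      \<le> ennreal (indicator {0..1} y * y powr (g - 1)) + ennreal (indicator {1..} y * y powr (2 * g - 2))"
    proof cases
      case 2
      have "(1 + y) powr (g - 1) \<le> 1 powr (g - 1)"
        using 2 assms by (intro powr_mono2') auto
      then have "y powr (g - 1) * (1 + y) powr (g - 1) \<le> y powr (g - 1)"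
        by (simp add: mult_left_le)
      with 2 show ?thesis
        by (auto intro: add_increasing2 ennreal_leI)
    next
      case 3
      have "(1 + y) powr (g - 1) \<le> y powr (g - 1)"
        using 3 assms by (intro powr_mono2') auto
      then have "y powr (g - 1) * (1 + y) powr (g - 1) \<le> y powr (g - 1) * y powr (g - 1)"
        by (simp add: mult_left_mono)
      also have "\<dots> = y powr (2 * g - 2)"
        using 3 by (simp add: powr_add[symmetric])
      finally show ?thesis
        using 3 by (auto intro: add_increasing ennreal_leI)
    qed simp
  qed
  also have "\<dots> = (\<integral>\<^sup>+y. ennreal (indicator {0..1} y * y powr (g - 1)) \<partial>lborel)
                 + (\<integral>\<^sup>+y. ennreal (indicator {1..} y * y powr (2 * g - 2)) \<partial>lborel)"
    by (rule nn_integral_add) auto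
  also have "\<dots> < \<infinity>"
    using nn_integral_powr_from_0_finite[of "g - 1" 1] nn_integral_powr_to_inf_finite[of "2 * g - 2" 1]
      assms by simp
  finally show ?thesis .
qed

lemma gram_constant_pos:
  assumes "0 < g" "g < 1"
  shows "gram_constant g > 0"
proof -
  have "ennreal (2 powr (g - 1))
      = (\<integral>\<^sup>+(y::real). ennreal (2 powr (g - 1)) * indicator {0<..1} y \<partial>lborel)"
    by (subst nn_integral_cmult_indicator) auto
  also have "\<dots> \<le> gram_constant g"
    unfolding gram_constant_def
  proof (intro nn_integral_mono)
    fix y :: real
    show "ennreal (2 powr (g - 1)) * indicator {0<..1} y
      \<le> ennreal (indicator {0<..} y * (y powr (g - 1) * (1 + y) powr (g - 1)))"
    proof (cases "0 < y \<and> y \<le> 1")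
      case True
      have "1 \<le> y powr (g - 1)"
        using True assms powr_mono2'[of "g - 1" y 1] by simp
      moreover have "2 powr (g - 1) \<le> (1 + y) powr (g - 1)"
        using True assms by (intro powr_mono2') auto
      ultimately have "2 powr (g - 1) \<le> y powr (g - 1) * (1 + y) powr (g - 1)"
        by (metis mult_1 mult_mono order_trans powr_ge_zero zero_le_one)
      then show ?thesis
        using True by (simp add: ennreal_leI)
    qed auto
  qed
  finally have "ennreal (2 powr (g - 1)) \<le> gram_constant g" .
  then show ?thesis
    by (rule order_less_le_trans[rotated]) simp
qed

lemma trunc_kernel_product_rescaled:
  assumes "r < s"
  shows "trunc_kernel g (s + (s - r) * y) r * trunc_kernel g (s + (s - r) * y) s
           = (s - r) powr (2 * g - 2) * (indicator {0<..} y * (y powr (g - 1) * (1 + y) powr (g - 1)))"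
proof (cases "y > 0")
  case True
  define d where "d = s - r"
  have d: "d > 0"
    using assms by (simp add: d_def)
  have "s + d * y - r = d * (1 + y)"
    by (simp add: d_def algebra_simps)
  moreover have "r < s + d * y"
    using mult_pos_pos[OF d True] assms by linarith
  ultimately have "trunc_kernel g (s + d * y) r * trunc_kernel g (s + d * y) s
      = (d * (1 + y)) powr (g - 1) * (d * y) powr (g - 1)"
    using True d by (simp add: trunc_kernel_def)
  also have "\<dots> = (d powr (g - 1) * d powr (g - 1)) * (y powr (g - 1) * (1 + y) powr (g - 1))"
    using True d by (simp add: powr_mult mult_ac)
  also have "d powr (g - 1) * d powr (g - 1) = d powr (2 * g - 2)"
    by (simp add: powr_add[symmetric])
  finally show ?thesis
    using True by (simp add: d_def)
next
  case False
  then have "(s - r) * y \<le> 0"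
    using assms by (simp add: mult_nonneg_nonpos)
  then show ?thesis
    using False by (simp add: trunc_kernel_def)
qed

lemma nn_integral_trunc_kernel_product_less:
  assumes "r < s" "0 < g"
  shows "(\<integral>\<^sup>+x. ennreal (trunc_kernel g x r * trunc_kernel g x s) \<partial>lborel)
           = ennreal ((s - r) powr (2 * g - 1)) * gram_constant g"
proof -
  have "(\<integral>\<^sup>+x. ennreal (trunc_kernel g x r * trunc_kernel g x s) \<partial>lborel)
      = ennreal (s - r) * (\<integral>\<^sup>+y. ennreal (trunc_kernel g (s + (s - r) * y) r
                                            * trunc_kernel g (s + (s - r) * y) s) \<partial>lborel)"
    using assms by (subst nn_integral_real_affine[where c = "s - r" and t = s]) auto
  also have "\<dots> = ennreal (s - r) * (ennreal ((s - r) powr (2 * g - 2)) * gram_constant g)"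
    unfolding trunc_kernel_product_rescaled[OF assms(1)] gram_constant_def
    by (subst nn_integral_cmult[symmetric]) (auto simp: ennreal_mult')
  also have "\<dots> = ennreal ((s - r) * (s - r) powr (2 * g - 2)) * gram_constant g"
    using assms by (simp add: ennreal_mult mult.assoc)
  also have "(s - r) * (s - r) powr (2 * g - 2) = (s - r) powr (2 * g - 1)"
    using assms by (simp add: powr_mult_base)
  finally show ?thesis .
qed

lemma nn_integral_trunc_kernel_product:
  assumes "s \<noteq> r" "0 < b"
  shows "(\<integral>\<^sup>+x. ennreal (trunc_kernel (b/2) x r * trunc_kernel (b/2) x s) \<partial>lborel)
           = ennreal (Gamma b * omega b \<bar>s - r\<bar>) * gram_constant (b/2)"
proof -
  have "Gamma b * omega b \<bar>s - r\<bar> = \<bar>s - r\<bar> powr (2 * (b/2) - 1)"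
    using Gamma_real_pos[OF assms(2)] by (simp add: omega_def)
  moreover have "(\<integral>\<^sup>+x. ennreal (trunc_kernel (b/2) x r * trunc_kernel (b/2) x s) \<partial>lborel)
           = ennreal (\<bar>s - r\<bar> powr (2 * (b/2) - 1)) * gram_constant (b/2)"
  proof (cases "r < s")
    case True
    then show ?thesis
      using nn_integral_trunc_kernel_product_less[OF True] assms(2) by simp
  next
    case False
    then have "s < r"
      using assms(1) by simp
    then show ?thesis
      using nn_integral_trunc_kernel_product_less[OF \<open>s < r\<close>] assms(2)
      by (simp add: mult.commute abs_minus_commute)
  qed
  ultimately show ?thesis
    by simp
qed

section \<open>Integrals over the plane\<close>

interpretation lborel_triple: pair_sigma_finite lborel "lborel \<Otimes>\<^sub>M lborel"
  unfolding pair_sigma_finite_def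
  by (simp add: lborel.sigma_finite_measure_axioms lborel_pair.P.sigma_finite_measure_axioms)

lemma nn_integral_lborel_pair_difference:
  fixes K f :: "real \<Rightarrow> ennreal"
  assumes [measurable]: "K \<in> borel_measurable borel" "f \<in> borel_measurable borel"
  shows "(\<integral>\<^sup>+p. K (fst p - snd p) * f (snd p) \<partial>(lborel \<Otimes>\<^sub>M lborel))
           = integral\<^sup>N lborel K * integral\<^sup>N lborel f"
    and "(\<integral>\<^sup>+p. K (fst p - snd p) * f (fst p) \<partial>(lborel \<Otimes>\<^sub>M lborel))
           = integral\<^sup>N lborel K * integral\<^sup>N lborel f"
proof -
  have shift: "(\<integral>\<^sup>+s. K (s - r) \<partial>lborel) = integral\<^sup>N lborel K" for r
    using nn_integral_real_affine[of K 1 "- r"] by simp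
  have reflect: "(\<integral>\<^sup>+r. K (s - r) \<partial>lborel) = integral\<^sup>N lborel K" for s
    using nn_integral_real_affine[of K "- 1" s] by simp
  have "(\<integral>\<^sup>+p. K (fst p - snd p) * f (snd p) \<partial>(lborel \<Otimes>\<^sub>M lborel))
      = (\<integral>\<^sup>+r. (\<integral>\<^sup>+s. K (s - r) \<partial>lborel) * f r \<partial>lborel)"
    by (subst lborel_pair.nn_integral_snd[symmetric]) (simp_all add: nn_integral_multc)
  also have "\<dots> = integral\<^sup>N lborel K * integral\<^sup>N lborel f"
    by (simp add: shift nn_integral_cmult)
  finally show "(\<integral>\<^sup>+p. K (fst p - snd p) * f (snd p) \<partial>(lborel \<Otimes>\<^sub>M lborel))
      = integral\<^sup>N lborel K * integral\<^sup>N lborel f" .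
  have "(\<integral>\<^sup>+p. K (fst p - snd p) * f (fst p) \<partial>(lborel \<Otimes>\<^sub>M lborel))
      = (\<integral>\<^sup>+s. (\<integral>\<^sup>+r. K (s - r) \<partial>lborel) * f s \<partial>lborel)"
    by (subst lborel.nn_integral_fst[symmetric]) (simp_all add: nn_integral_multc)
  also have "\<dots> = integral\<^sup>N lborel K * integral\<^sup>N lborel f"
    by (simp add: reflect nn_integral_cmult)
  finally show "(\<integral>\<^sup>+p. K (fst p - snd p) * f (fst p) \<partial>(lborel \<Otimes>\<^sub>M lborel))
      = integral\<^sup>N lborel K * integral\<^sup>N lborel f" .
qed

lemma AE_lborel_pair_fst_neq_snd: "AE p in lborel \<Otimes>\<^sub>M lborel. fst p \<noteq> (snd p :: real)"
proof -
  have "{p \<in> space (lborel \<Otimes>\<^sub>M lborel). fst p \<noteq> (snd p :: real)} \<in> sets (lborel \<Otimes>\<^sub>M lborel)"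
    by measurable
  moreover have "AE s in lborel. AE r in lborel. s \<noteq> (r :: real)"
  proof (rule AE_I2)
    fix s :: real
    show "AE r in lborel. s \<noteq> r"
      using AE_lborel_singleton[of s] by eventually_elim auto
  qed
  ultimately show ?thesis
    by (simp add: lborel_pair.AE_pair_iff[where P = "\<lambda>s r. s \<noteq> r"])
qed

lemma (in pair_sigma_finite) integrable_inner_product:
  fixes f :: "'a \<Rightarrow> 'c::{real_inner, banach, second_countable_topology}"
  assumes f: "integrable M1 f" and g: "integrable M2 g"
  shows "integrable (M1 \<Otimes>\<^sub>M M2) (\<lambda>p. f (fst p) \<bullet> g (snd p))"
  unfolding integrable_iff_bounded
proof
  have [measurable]: "f \<in> borel_measurable M1" "g \<in> borel_measurable M2"
    using f g by auto
  show "(\<lambda>p. f (fst p) \<bullet> g (snd p)) \<in> borel_measurable (M1 \<Otimes>\<^sub>M M2)"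
    by measurable
  have "(\<integral>\<^sup>+p. ennreal (norm (f (fst p) \<bullet> g (snd p))) \<partial>(M1 \<Otimes>\<^sub>M M2))
      \<le> (\<integral>\<^sup>+p. ennreal (norm (f (fst p))) * ennreal (norm (g (snd p))) \<partial>(M1 \<Otimes>\<^sub>M M2))"
    by (intro nn_integral_mono) (simp add: ennreal_mult[symmetric] Cauchy_Schwarz_ineq2 ennreal_leI)
  also have "\<dots> = (\<integral>\<^sup>+x. ennreal (norm (f x)) \<partial>M1) * (\<integral>\<^sup>+y. ennreal (norm (g y)) \<partial>M2)"
    by (subst M2.nn_integral_fst[symmetric]) (simp_all add: nn_integral_cmult nn_integral_multc)
  also have "\<dots> < \<infinity>"
    using f g by (simp add: integrable_iff_bounded ennreal_mult_less_top)
  finally show "(\<integral>\<^sup>+p. ennreal (norm (f (fst p) \<bullet> g (snd p))) \<partial>(M1 \<Otimes>\<^sub>M M2)) < \<infinity>" .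
qed

lemma (in pair_sigma_finite) integral_inner_product:
  fixes f :: "'a \<Rightarrow> 'c::{real_inner, banach, second_countable_topology}"
  assumes f: "integrable M1 f" and g: "integrable M2 g"
  shows "(\<integral>p. f (fst p) \<bullet> g (snd p) \<partial>(M1 \<Otimes>\<^sub>M M2)) = integral\<^sup>L M1 f \<bullet> integral\<^sup>L M2 g"
proof -
  have "(\<integral>p. f (fst p) \<bullet> g (snd p) \<partial>(M1 \<Otimes>\<^sub>M M2)) = (\<integral>x. f x \<bullet> integral\<^sup>L M2 g \<partial>M1)"
    using integral_fst'[OF integrable_inner_product[OF f g]] g by simp
  also have "\<dots> = integral\<^sup>L M1 f \<bullet> integral\<^sup>L M2 g"
    using f by simp
  finally show ?thesis .
qed

lemma (in sigma_finite_measure) integrable_if_integrable_norm_product: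
  fixes f :: "'a \<Rightarrow> 'c::{banach, second_countable_topology}"
  assumes [measurable]: "f \<in> borel_measurable M"
    and "integrable (M \<Otimes>\<^sub>M M) (\<lambda>p. norm (f (fst p)) * norm (f (snd p)))"
  shows "integrable M f"
proof -
  have "(\<integral>\<^sup>+x. ennreal (norm (f x)) \<partial>M) * (\<integral>\<^sup>+x. ennreal (norm (f x)) \<partial>M)
      = (\<integral>\<^sup>+p. ennreal (norm (norm (f (fst p)) * norm (f (snd p)))) \<partial>(M \<Otimes>\<^sub>M M))"
    by (subst nn_integral_fst[symmetric])
       (simp_all add: ennreal_mult nn_integral_cmult nn_integral_multc)
  also have "\<dots> < \<infinity>"
    using assms(2) unfolding integrable_iff_bounded by simp
  finally show ?thesis
    unfolding integrable_iff_bounded by (auto simp: ennreal_mult_less_top)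
qed

section \<open>Square integrable functions supported in \<open>[0, t]\<close>\<close>

definition sq_integrable_supported :: "real \<Rightarrow> (real \<Rightarrow> 'a::real_normed_vector) \<Rightarrow> bool" where
  "sq_integrable_supported t U \<longleftrightarrow>
     U \<in> borel_measurable lborel \<and> integrable lborel (\<lambda>r. (norm (U r))\<^sup>2) \<and> (\<forall>r. r \<notin> {0..t} \<longrightarrow> U r = 0)"

lemma sq_integrable_supported_measurable:
  "sq_integrable_supported t U \<Longrightarrow> U \<in> borel_measurable lborel"
  by (simp add: sq_integrable_supported_def)

lemma parallelogram_law_norm:
  fixes x y :: "'a::real_inner"
  shows "(norm (x + y))\<^sup>2 + (norm (x - y))\<^sup>2 = 2 * (norm x)\<^sup>2 + 2 * (norm y)\<^sup>2"
  by (simp add: power2_norm_eq_inner inner_add_left inner_add_right inner_diff_left inner_diff_right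
      inner_commute)

lemma sq_integrable_supported_add_diff:
  fixes U V :: "real \<Rightarrow> 'a::{real_inner, banach, second_countable_topology}"
  assumes "sq_integrable_supported t U" "sq_integrable_supported t V"
  shows "sq_integrable_supported t (\<lambda>r. U r + V r)" "sq_integrable_supported t (\<lambda>r. U r - V r)"
proof -
  note [measurable] = assms[THEN sq_integrable_supported_measurable]
  have bound: "integrable lborel (\<lambda>r. 2 * (norm (U r))\<^sup>2 + 2 * (norm (V r))\<^sup>2)"
    using assms by (simp add: sq_integrable_supported_def)
  have "(norm (x + y))\<^sup>2 \<le> 2 * (norm x)\<^sup>2 + 2 * (norm y)\<^sup>2"
    "(norm (x - y))\<^sup>2 \<le> 2 * (norm x)\<^sup>2 + 2 * (norm y)\<^sup>2" for x y :: 'a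
    using parallelogram_law_norm[of x y] zero_le_power2[of "norm (x - y)"]
      zero_le_power2[of "norm (x + y)"]
    by linarith+
  then have "integrable lborel (\<lambda>r. (norm (U r + V r))\<^sup>2)" "integrable lborel (\<lambda>r. (norm (U r - V r))\<^sup>2)"
    by (auto intro!: Bochner_Integration.integrable_bound[OF bound] AE_I2 simp del: power2_norm_eq_inner)
  then show "sq_integrable_supported t (\<lambda>r. U r + V r)" "sq_integrable_supported t (\<lambda>r. U r - V r)"
    using assms by (auto simp: sq_integrable_supported_def)
qed

lemma sq_integrable_supported_restrict:
  fixes v :: "real \<Rightarrow> 'a::{real_normed_vector, second_countable_topology}"
  assumes "t \<le> T"
    and "set_borel_measurable lborel {0..T} v"
    and "set_integrable lborel {0..T} (\<lambda>s. (norm (v s))\<^sup>2)"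
  shows "sq_integrable_supported t (\<lambda>r. indicator {0..t} r *\<^sub>R v r)"
proof -
  have restrict_twice:
    "indicator {0..t} r *\<^sub>R v r = indicator {0..t} r *\<^sub>R (indicator {0..T} r *\<^sub>R v r)" for r
    using assms(1) by (simp add: indicator_def)
  have [measurable]: "(\<lambda>r. indicator {0..T} r *\<^sub>R v r) \<in> borel_measurable lborel"
    using assms(2) by (simp add: set_borel_measurable_def)
  have measurable: "(\<lambda>r. indicator {0..t} r *\<^sub>R v r) \<in> borel_measurable lborel"
    unfolding restrict_twice by measurable
  have "integrable lborel (\<lambda>r. indicator {0..T} r *\<^sub>R (norm (v r))\<^sup>2)"
    using assms(3) by (simp add: set_integrable_def)
  moreover have "(\<lambda>r. (norm (indicator {0..t} r *\<^sub>R v r))\<^sup>2) \<in> borel_measurable lborel"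
    using measurable by measurable
  ultimately have "integrable lborel (\<lambda>r. (norm (indicator {0..t} r *\<^sub>R v r))\<^sup>2)"
    by (rule Bochner_Integration.integrable_bound) (use assms(1) in \<open>auto simp: indicator_def\<close>)
  with measurable show ?thesis
    by (auto simp: sq_integrable_supported_def)
qed

lemma integrable_omega_norm_product:
  fixes U :: "real \<Rightarrow> 'a::{real_inner, banach, second_countable_topology}"
  assumes "0 < b" and U: "sq_integrable_supported t U"
  shows "integrable (lborel \<Otimes>\<^sub>M lborel)
           (\<lambda>p. omega b \<bar>fst p - snd p\<bar> * (norm (U (snd p)) * norm (U (fst p))))"
proof -
  note [measurable] = sq_integrable_supported_measurable[OF U]
  define K where "K \<tau> = indicator {-t..t} \<tau> * omega b \<bar>\<tau>\<bar>" for \<tau> :: real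
  define N where "N r = (norm (U r))\<^sup>2" for r
  have [measurable]: "K \<in> borel_measurable borel" "N \<in> borel_measurable borel"
    unfolding K_def N_def by measurable
  have K_nonneg: "K \<tau> \<ge> 0" for \<tau>
    using assms(1) by (simp add: K_def omega_nonneg)
  have K_finite: "integral\<^sup>N lborel (\<lambda>\<tau>. ennreal (K \<tau>)) < \<infinity>"
    unfolding K_def using assms(1) by (rule nn_integral_omega_abs_finite)
  have N_finite: "integral\<^sup>N lborel (\<lambda>r. ennreal (N r)) < \<infinity>"
    using U by (simp add: sq_integrable_supported_def integrable_iff_bounded N_def)
  have "omega b \<bar>s - r\<bar> * (norm (U r) * norm (U s)) \<le> K (s - r) * N r + K (s - r) * N s" for s r
    using omega_norm_product_le[OF assms(1), of t U s r] U
    by (simp add: sq_integrable_supported_def K_def N_def distrib_left)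
  then have "(\<integral>\<^sup>+p. ennreal (norm (omega b \<bar>fst p - snd p\<bar> * (norm (U (snd p)) * norm (U (fst p)))))
                \<partial>(lborel \<Otimes>\<^sub>M lborel))
      \<le> (\<integral>\<^sup>+p. ennreal (K (fst p - snd p)) * ennreal (N (snd p))
                + ennreal (K (fst p - snd p)) * ennreal (N (fst p)) \<partial>(lborel \<Otimes>\<^sub>M lborel))"
    using assms(1) K_nonneg
    by (intro nn_integral_mono)
       (simp add: omega_nonneg N_def ennreal_leI flip: ennreal_mult ennreal_plus)
  also have "\<dots> = 2 * (integral\<^sup>N lborel (\<lambda>\<tau>. ennreal (K \<tau>)) * integral\<^sup>N lborel (\<lambda>r. ennreal (N r)))"
    using nn_integral_lborel_pair_difference[of "\<lambda>\<tau>. ennreal (K \<tau>)" "\<lambda>r. ennreal (N r)"]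
    by (simp add: nn_integral_add mult_2)
  also have "\<dots> < \<infinity>"
    using K_finite N_finite by (simp add: ennreal_mult_less_top)
  finally show ?thesis
    unfolding integrable_iff_bounded by simp
qed

section \<open>Positivity of the symmetric form\<close>

definition gram_lift :: "real \<Rightarrow> (real \<Rightarrow> 'a::real_inner) \<Rightarrow> real \<times> real \<times> real \<Rightarrow> real" where
  "gram_lift b U = (\<lambda>(x, s, r). trunc_kernel (b/2) x r * trunc_kernel (b/2) x s * (U r \<bullet> U s))"

lemma gram_lift_measurable[measurable]:
  fixes U :: "real \<Rightarrow> 'a::{real_inner, second_countable_topology}"
  assumes [measurable]: "U \<in> borel_measurable lborel"
  shows "gram_lift b U \<in> borel_measurable (lborel \<Otimes>\<^sub>M (lborel \<Otimes>\<^sub>M lborel))"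
  unfolding gram_lift_def by measurable

lemma nn_integral_gram_lift_norm:
  assumes "0 < b" and [measurable]: "U \<in> borel_measurable lborel"
  shows "(\<integral>\<^sup>+z. ennreal (gram_lift b (\<lambda>r. norm (U r)) z) \<partial>(lborel \<Otimes>\<^sub>M (lborel \<Otimes>\<^sub>M lborel)))
    = ennreal (Gamma b) * gram_constant (b/2)
      * (\<integral>\<^sup>+p. ennreal (omega b \<bar>fst p - snd p\<bar> * (norm (U (snd p)) * norm (U (fst p))))
           \<partial>(lborel \<Otimes>\<^sub>M lborel))"
proof -
  have "(\<integral>\<^sup>+z. ennreal (gram_lift b (\<lambda>r. norm (U r)) z) \<partial>(lborel \<Otimes>\<^sub>M (lborel \<Otimes>\<^sub>M lborel)))
      = (\<integral>\<^sup>+p. \<integral>\<^sup>+x. ennreal (gram_lift b (\<lambda>r. norm (U r)) (x, p)) \<partial>lborel \<partial>(lborel \<Otimes>\<^sub>M lborel))"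
    by (rule lborel_triple.nn_integral_snd[symmetric]) measurable
  also have "\<dots> = (\<integral>\<^sup>+p. ennreal (Gamma b) * gram_constant (b/2)
      * ennreal (omega b \<bar>fst p - snd p\<bar> * (norm (U (snd p)) * norm (U (fst p)))) \<partial>(lborel \<Otimes>\<^sub>M lborel))"
    using AE_lborel_pair_fst_neq_snd
  proof (rule nn_integral_cong_AE[OF eventually_mono])
    fix p :: "real \<times> real"
    assume "fst p \<noteq> snd p"
    moreover obtain s r where p: "p = (s, r)"
      by fastforce
    ultimately have "s \<noteq> r"
      by simp
    have "(\<integral>\<^sup>+x. ennreal (gram_lift b (\<lambda>r. norm (U r)) (x, p)) \<partial>lborel)
        = (\<integral>\<^sup>+x. ennreal (trunc_kernel (b/2) x r * trunc_kernel (b/2) x s) \<partial>lborel)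
          * ennreal (norm (U r) * norm (U s))"
      unfolding p gram_lift_def
      by (subst nn_integral_multc[symmetric]) (auto simp: ennreal_mult trunc_kernel_nonneg)
    also have "\<dots> = ennreal (Gamma b) * gram_constant (b/2)
                      * ennreal (omega b \<bar>s - r\<bar> * (norm (U r) * norm (U s)))"
      using assms(1) \<open>s \<noteq> r\<close>
      by (simp add: nn_integral_trunc_kernel_product ennreal_mult omega_nonneg mult_ac)
    finally show "(\<integral>\<^sup>+x. ennreal (gram_lift b (\<lambda>r. norm (U r)) (x, p)) \<partial>lborel)
        = ennreal (Gamma b) * gram_constant (b/2)
          * ennreal (omega b \<bar>fst p - snd p\<bar> * (norm (U (snd p)) * norm (U (fst p))))"
      by (simp add: p)
  qed
  also have "\<dots> = ennreal (Gamma b) * gram_constant (b/2)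
      * (\<integral>\<^sup>+p. ennreal (omega b \<bar>fst p - snd p\<bar> * (norm (U (snd p)) * norm (U (fst p))))
           \<partial>(lborel \<Otimes>\<^sub>M lborel))"
    by (rule nn_integral_cmult) measurable
  finally show ?thesis .
qed

context
  fixes b t :: real and U :: "real \<Rightarrow> 'a::{real_inner, banach, second_countable_topology}"
  assumes b: "0 < b" "b < 1" and U: "sq_integrable_supported t U"
begin

declare sq_integrable_supported_measurable[OF U, measurable]

lemma integrable_gram_lift_norm:
  "integrable (lborel \<Otimes>\<^sub>M (lborel \<Otimes>\<^sub>M lborel)) (gram_lift b (\<lambda>r. norm (U r)))"
proof -
  have "gram_lift b (\<lambda>r. norm (U r)) z \<ge> 0" for z
    by (auto simp: gram_lift_def trunc_kernel_nonneg split: prod.split)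
  moreover have "(\<integral>\<^sup>+p. ennreal (omega b \<bar>fst p - snd p\<bar> * (norm (U (snd p)) * norm (U (fst p))))
                   \<partial>(lborel \<Otimes>\<^sub>M lborel)) < \<infinity>"
    using integrable_omega_norm_product[OF b(1) U] b(1)
    by (simp add: integrable_iff_bounded omega_nonneg)
  ultimately show ?thesis
    using gram_constant_finite[of "b/2"] b
    by (simp add: integrable_iff_bounded nn_integral_gram_lift_norm ennreal_mult_less_top)
qed

lemma integrable_gram_lift: "integrable (lborel \<Otimes>\<^sub>M (lborel \<Otimes>\<^sub>M lborel)) (gram_lift b U)"
proof (rule Bochner_Integration.integrable_bound[OF integrable_gram_lift_norm])
  show "gram_lift b U \<in> borel_measurable (lborel \<Otimes>\<^sub>M (lborel \<Otimes>\<^sub>M lborel))"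
    by measurable
  show "AE z in lborel \<Otimes>\<^sub>M (lborel \<Otimes>\<^sub>M lborel).
          norm (gram_lift b U z) \<le> norm (gram_lift b (\<lambda>r. norm (U r)) z)"
    by (intro AE_I2)
       (auto simp: gram_lift_def abs_mult trunc_kernel_nonneg Cauchy_Schwarz_ineq2 mult_left_mono
         split: prod.split)
qed

lemma integral_gram_lift:
  "integral\<^sup>L (lborel \<Otimes>\<^sub>M (lborel \<Otimes>\<^sub>M lborel)) (gram_lift b U)
     = Gamma b * enn2real (gram_constant (b/2))
       * (\<integral>p. omega b \<bar>fst p - snd p\<bar> * (U (snd p) \<bullet> U (fst p)) \<partial>(lborel \<Otimes>\<^sub>M lborel))"
proof -
  have "integral\<^sup>L (lborel \<Otimes>\<^sub>M (lborel \<Otimes>\<^sub>M lborel)) (gram_lift b U)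
      = (\<integral>p. (\<integral>x. gram_lift b U (x, p) \<partial>lborel) \<partial>(lborel \<Otimes>\<^sub>M lborel))"
    using lborel_triple.integral_snd[of "\<lambda>x p. gram_lift b U (x, p)"] integrable_gram_lift by simp
  also have "\<dots> = (\<integral>p. Gamma b * enn2real (gram_constant (b/2))
                        * (omega b \<bar>fst p - snd p\<bar> * (U (snd p) \<bullet> U (fst p))) \<partial>(lborel \<Otimes>\<^sub>M lborel))"
  proof (rule integral_cong_AE)
    show "(\<lambda>p. \<integral>x. gram_lift b U (x, p) \<partial>lborel) \<in> borel_measurable (lborel \<Otimes>\<^sub>M lborel)"
      by measurable
    show "AE p in lborel \<Otimes>\<^sub>M lborel. (\<integral>x. gram_lift b U (x, p) \<partial>lborel)
        = Gamma b * enn2real (gram_constant (b/2)) * (omega b \<bar>fst p - snd p\<bar> * (U (snd p) \<bullet> U (fst p)))"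
      using AE_lborel_pair_fst_neq_snd
    proof (rule eventually_mono)
      fix p :: "real \<times> real"
      assume "fst p \<noteq> snd p"
      moreover obtain s r where p: "p = (s, r)"
        by fastforce
      ultimately have "s \<noteq> r"
        by simp
      have "(\<integral>x. trunc_kernel (b/2) x r * trunc_kernel (b/2) x s \<partial>lborel)
          = enn2real (\<integral>\<^sup>+x. ennreal (trunc_kernel (b/2) x r * trunc_kernel (b/2) x s) \<partial>lborel)"
        by (rule integral_eq_nn_integral) (auto simp: trunc_kernel_nonneg)
      also have "\<dots> = Gamma b * omega b \<bar>s - r\<bar> * enn2real (gram_constant (b/2))"
        using \<open>s \<noteq> r\<close> b(1) by (simp add: nn_integral_trunc_kernel_product enn2real_mult omega_nonneg)
      finally show "(\<integral>x. gram_lift b U (x, p) \<partial>lborel)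
          = Gamma b * enn2real (gram_constant (b/2)) * (omega b \<bar>fst p - snd p\<bar> * (U (snd p) \<bullet> U (fst p)))"
        by (simp add: p gram_lift_def mult_ac)
    qed
  qed measurable
  also have "\<dots> = Gamma b * enn2real (gram_constant (b/2))
                  * (\<integral>p. omega b \<bar>fst p - snd p\<bar> * (U (snd p) \<bullet> U (fst p)) \<partial>(lborel \<Otimes>\<^sub>M lborel))"
    by (rule integral_mult_right_zero)
  finally show ?thesis .
qed

lemma integral_gram_lift_nonneg: "0 \<le> integral\<^sup>L (lborel \<Otimes>\<^sub>M (lborel \<Otimes>\<^sub>M lborel)) (gram_lift b U)"
proof -
  have "0 \<le> (\<integral>x. (\<integral>p. gram_lift b U (x, p) \<partial>(lborel \<Otimes>\<^sub>M lborel)) \<partial>lborel)"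
    using lborel_triple.AE_integrable_fst'[OF integrable_gram_lift_norm]
  proof (rule integral_nonneg_AE[OF eventually_mono])
    fix x :: real
    define F where "F r = trunc_kernel (b/2) x r *\<^sub>R U r" for r
    have F_measurable: "F \<in> borel_measurable lborel"
      unfolding F_def by measurable
    have G_eq: "gram_lift b U (x, p) = F (fst p) \<bullet> F (snd p)" for p
      by (auto simp: gram_lift_def F_def inner_commute mult_ac split: prod.split)
    have norm_eq: "gram_lift b (\<lambda>r. norm (U r)) (x, p) = norm (F (fst p)) * norm (F (snd p))" for p
      by (auto simp: gram_lift_def F_def trunc_kernel_nonneg mult_ac split: prod.split)
    assume "integrable (lborel \<Otimes>\<^sub>M lborel) (\<lambda>p. gram_lift b (\<lambda>r. norm (U r)) (x, p))"
    then have "integrable (lborel \<Otimes>\<^sub>M lborel) (\<lambda>p. norm (F (fst p)) * norm (F (snd p)))"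
      by (simp add: norm_eq)
    then have F_integrable: "integrable lborel F"
      by (rule lborel.integrable_if_integrable_norm_product[OF F_measurable])
    have "(\<integral>p. gram_lift b U (x, p) \<partial>(lborel \<Otimes>\<^sub>M lborel)) = integral\<^sup>L lborel F \<bullet> integral\<^sup>L lborel F"
      unfolding G_eq by (rule lborel_pair.integral_inner_product[OF F_integrable F_integrable])
    then show "0 \<le> (\<integral>p. gram_lift b U (x, p) \<partial>(lborel \<Otimes>\<^sub>M lborel))"
      by simp
  qed
  also have "\<dots> = integral\<^sup>L (lborel \<Otimes>\<^sub>M (lborel \<Otimes>\<^sub>M lborel)) (gram_lift b U)"
    by (rule lborel_triple.integral_fst'[OF integrable_gram_lift])
  finally show ?thesis .
qed

lemma omega_form_nonneg:
  "0 \<le> (\<integral>p. omega b \<bar>fst p - snd p\<bar> * (U (snd p) \<bullet> U (fst p)) \<partial>(lborel \<Otimes>\<^sub>M lborel))"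
proof -
  have "0 < Gamma b * enn2real (gram_constant (b/2))"
    using b gram_constant_pos[of "b/2"] gram_constant_finite[of "b/2"]
    by (simp add: enn2real_positive_iff)
  then show ?thesis
    using integral_gram_lift_nonneg integral_gram_lift by (simp add: zero_le_mult_iff)
qed

end

section \<open>The Riemann--Liouville form\<close>

definition frac_form :: "real \<Rightarrow> (real \<Rightarrow> 'a::real_inner) \<Rightarrow> real" where
  "frac_form b U = (\<integral>p. frac_kernel b (fst p) (snd p) * (U (snd p) \<bullet> U (fst p)) \<partial>(lborel \<Otimes>\<^sub>M lborel))"

context
  fixes b t :: real and U :: "real \<Rightarrow> 'a::{real_inner, banach, second_countable_topology}"
  assumes b: "0 < b" and U: "sq_integrable_supported t U"
begin

declare sq_integrable_supported_measurable[OF U, measurable]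

lemma integrable_frac_form:
  "integrable (lborel \<Otimes>\<^sub>M lborel) (\<lambda>p. frac_kernel b (fst p) (snd p) * (U (snd p) \<bullet> U (fst p)))"
proof (rule Bochner_Integration.integrable_bound[OF integrable_omega_norm_product[OF b U]])
  show "(\<lambda>p. frac_kernel b (fst p) (snd p) * (U (snd p) \<bullet> U (fst p)))
          \<in> borel_measurable (lborel \<Otimes>\<^sub>M lborel)"
    by measurable
  have "\<bar>frac_kernel b s r\<bar> * \<bar>U r \<bullet> U s\<bar> \<le> omega b \<bar>s - r\<bar> * (norm (U r) * norm (U s))" for s r
    using abs_frac_kernel_le[OF b] Cauchy_Schwarz_ineq2 omega_nonneg[OF b] by (intro mult_mono) auto
  then show "AE p in lborel \<Otimes>\<^sub>M lborel. norm (frac_kernel b (fst p) (snd p) * (U (snd p) \<bullet> U (fst p)))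
      \<le> norm (omega b \<bar>fst p - snd p\<bar> * (norm (U (snd p)) * norm (U (fst p))))"
    using b by (intro AE_I2) (simp add: abs_mult omega_nonneg)
qed

lemma omega_form_eq_twice_frac_form:
  "(\<integral>p. omega b \<bar>fst p - snd p\<bar> * (U (snd p) \<bullet> U (fst p)) \<partial>(lborel \<Otimes>\<^sub>M lborel)) = 2 * frac_form b U"
proof -
  define F where "F = (\<lambda>p. frac_kernel b (fst p) (snd p) * (U (snd p) \<bullet> U (fst p)))"
  have [measurable]: "F \<in> borel_measurable (lborel \<Otimes>\<^sub>M lborel)"
    unfolding F_def by measurable
  have "(\<lambda>p. omega b \<bar>fst p - snd p\<bar> * (U (snd p) \<bullet> U (fst p))) = (\<lambda>p. F p + (\<lambda>(x, y). F (y, x)) p)"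
    by (auto simp: F_def omega_abs_eq_frac_kernel_sum algebra_simps inner_commute)
  moreover have "integrable (lborel \<Otimes>\<^sub>M lborel) F"
    unfolding F_def by (rule integrable_frac_form)
  ultimately have "(\<integral>p. omega b \<bar>fst p - snd p\<bar> * (U (snd p) \<bullet> U (fst p)) \<partial>(lborel \<Otimes>\<^sub>M lborel))
      = integral\<^sup>L (lborel \<Otimes>\<^sub>M lborel) F + (\<integral>(x, y). F (y, x) \<partial>(lborel \<Otimes>\<^sub>M lborel))"
    by (simp add: lborel_pair.integrable_product_swap)
  also have "(\<integral>(x, y). F (y, x) \<partial>(lborel \<Otimes>\<^sub>M lborel)) = integral\<^sup>L (lborel \<Otimes>\<^sub>M lborel) F"
    by (rule lborel_pair.integral_product_swap) measurable
  finally show ?thesis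
    by (simp add: frac_form_def F_def[symmetric])
qed

lemma frac_form_nonneg: "b < 1 \<Longrightarrow> 0 \<le> frac_form b U"
  using omega_form_nonneg[OF b _ U] omega_form_eq_twice_frac_form by simp

lemma integral_frac_kernel_inner_eq_frac_form:
  "(\<integral>s. (\<integral>r. frac_kernel b s r *\<^sub>R U r \<partial>lborel) \<bullet> U s \<partial>lborel) = frac_form b U"
proof -
  have "frac_form b U = (\<integral>s. (\<integral>r. frac_kernel b s r * (U r \<bullet> U s) \<partial>lborel) \<partial>lborel)"
    unfolding frac_form_def using lborel_pair.integral_fst'[OF integrable_frac_form] by simp
  also have "\<dots> = (\<integral>s. (\<integral>r. frac_kernel b s r *\<^sub>R U r \<partial>lborel) \<bullet> U s \<partial>lborel)"
  proof (rule integral_cong_AE)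
    show "AE s in lborel. (\<integral>r. frac_kernel b s r * (U r \<bullet> U s) \<partial>lborel)
                          = (\<integral>r. frac_kernel b s r *\<^sub>R U r \<partial>lborel) \<bullet> U s"
      using lborel_pair.AE_integrable_fst'[OF integrable_omega_norm_product[OF b U]]
    proof (rule eventually_mono)
      fix s
      assume "integrable lborel (\<lambda>r. omega b \<bar>fst (s, r) - snd (s, r)\<bar>
                                    * (norm (U (snd (s, r))) * norm (U (fst (s, r)))))"
      then have "integrable lborel (\<lambda>r. norm (U s) * (omega b \<bar>s - r\<bar> * norm (U r)))"
        by (simp add: mult_ac)
      then have "U s \<noteq> 0 \<Longrightarrow> integrable lborel (\<lambda>r. frac_kernel b s r *\<^sub>R U r)"
        using abs_frac_kernel_le[OF b] omega_nonneg[OF b]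
        by (auto intro!: Bochner_Integration.integrable_bound[where f = "\<lambda>r. omega b \<bar>s - r\<bar> * norm (U r)"]
                 AE_I2 mult_right_mono)
      then have "(\<integral>r. (frac_kernel b s r *\<^sub>R U r) \<bullet> U s \<partial>lborel)
          = (\<integral>r. frac_kernel b s r *\<^sub>R U r \<partial>lborel) \<bullet> U s"
        by (rule integral_inner_left)
      then show "(\<integral>r. frac_kernel b s r * (U r \<bullet> U s) \<partial>lborel)
          = (\<integral>r. frac_kernel b s r *\<^sub>R U r \<partial>lborel) \<bullet> U s"
        by simp
    qed
  qed measurable
  finally show ?thesis ..
qed

end

lemma frac_form_parallelogram:
  fixes U V :: "real \<Rightarrow> 'a::{real_inner, banach, second_countable_topology}"
  assumes "0 < b" "sq_integrable_supported t U" "sq_integrable_supported t V"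
  shows "frac_form b (\<lambda>r. U r + V r) + frac_form b (\<lambda>r. U r - V r)
           = 2 * frac_form b U + 2 * frac_form b V"
proof -
  note integrable = integrable_frac_form[OF assms(1)]
  note UV = sq_integrable_supported_add_diff[OF assms(2,3)]
  have "frac_form b (\<lambda>r. U r + V r) + frac_form b (\<lambda>r. U r - V r)
      = (\<integral>p. 2 * (frac_kernel b (fst p) (snd p) * (U (snd p) \<bullet> U (fst p)))
            + 2 * (frac_kernel b (fst p) (snd p) * (V (snd p) \<bullet> V (fst p))) \<partial>(lborel \<Otimes>\<^sub>M lborel))"
    unfolding frac_form_def
    by (subst Bochner_Integration.integral_add[symmetric, OF integrable[OF UV(1)] integrable[OF UV(2)]])
       (auto intro!: Bochner_Integration.integral_cong simp: inner_add_left inner_add_right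
         inner_diff_left inner_diff_right algebra_simps)
  also have "\<dots> = 2 * frac_form b U + 2 * frac_form b V"
    using integrable[OF assms(2)] integrable[OF assms(3)] by (simp add: frac_form_def)
  finally show ?thesis .
qed

lemma Iint_frac_int_inner_eq_frac_form:
  fixes u :: "real \<Rightarrow> 'a::{real_inner, banach, second_countable_topology}"
  assumes "0 < b" "sq_integrable_supported t (\<lambda>r. indicator {0..t} r *\<^sub>R u r)"
  shows "Iint (\<lambda>s. frac_int b u s \<bullet> u s) t = frac_form b (\<lambda>r. indicator {0..t} r *\<^sub>R u r)"
proof -
  have frac_int_eq: "frac_int b u s = (\<integral>r. frac_kernel b s r *\<^sub>R (indicator {0..t} r *\<^sub>R u r) \<partial>lborel)"
    if "s \<in> {0..t}" for s
    unfolding frac_int_def set_lebesgue_integral_def using assms(1) that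
    by (auto intro!: Bochner_Integration.integral_cong simp: frac_kernel_def indicator_def omega_def)
  have "Iint (\<lambda>s. frac_int b u s \<bullet> u s) t
      = (\<integral>s. (\<integral>r. frac_kernel b s r *\<^sub>R (indicator {0..t} r *\<^sub>R u r) \<partial>lborel)
               \<bullet> (indicator {0..t} s *\<^sub>R u s) \<partial>lborel)"
    unfolding Iint_def set_lebesgue_integral_def
    by (rule Bochner_Integration.integral_cong) (auto simp: frac_int_eq indicator_def)
  also have "\<dots> = frac_form b (\<lambda>r. indicator {0..t} r *\<^sub>R u r)"
    by (rule integral_frac_kernel_inner_eq_frac_form[OF assms])
  finally show ?thesis .
qed

lemma Iint_frac_int_zero_inner:
  "Iint (\<lambda>s. frac_int 0 u s \<bullet> u s) t = (\<integral>s. (norm (indicator {0..t} s *\<^sub>R u s))\<^sup>2 \<partial>lborel)"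
  unfolding Iint_def set_lebesgue_integral_def frac_int_def
  by (rule Bochner_Integration.integral_cong) (auto simp: indicator_def power2_norm_eq_inner)

lemma Iint_frac_int_inner_nonneg:
  fixes u :: "real \<Rightarrow> 'a::{real_inner, banach, second_countable_topology}"
  assumes "0 \<le> b" "b < 1" "sq_integrable_supported t (\<lambda>r. indicator {0..t} r *\<^sub>R u r)"
  shows "0 \<le> Iint (\<lambda>s. frac_int b u s \<bullet> u s) t"
proof (cases "b = 0")
  case True
  then show ?thesis
    by (simp add: Iint_frac_int_zero_inner)
next
  case False
  with assms show ?thesis
    by (simp add: Iint_frac_int_inner_eq_frac_form frac_form_nonneg)
qed

lemma Iint_frac_int_inner_parallelogram:
  fixes v w :: "real \<Rightarrow> 'a::{real_inner, banach, second_countable_topology}"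
  assumes "0 \<le> b"
    and V: "sq_integrable_supported t (\<lambda>r. indicator {0..t} r *\<^sub>R v r)"
    and W: "sq_integrable_supported t (\<lambda>r. indicator {0..t} r *\<^sub>R w r)"
  shows "Iint (\<lambda>s. frac_int b (\<lambda>r. v r + w r) s \<bullet> (v s + w s)) t
           + Iint (\<lambda>s. frac_int b (\<lambda>r. v r - w r) s \<bullet> (v s - w s)) t
         = 2 * Iint (\<lambda>s. frac_int b v s \<bullet> v s) t + 2 * Iint (\<lambda>s. frac_int b w s \<bullet> w s) t"
proof (cases "b = 0")
  case True
  define V' W' where "V' r = indicator {0..t} r *\<^sub>R v r" and "W' r = indicator {0..t} r *\<^sub>R w r" for r
  have "integrable lborel (\<lambda>r. (norm (V' r + W' r))\<^sup>2)" "integrable lborel (\<lambda>r. (norm (V' r - W' r))\<^sup>2)"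
    "integrable lborel (\<lambda>r. (norm (V' r))\<^sup>2)" "integrable lborel (\<lambda>r. (norm (W' r))\<^sup>2)"
    using sq_integrable_supported_add_diff[OF V W] V W
    by (simp_all add: sq_integrable_supported_def V'_def W'_def)
  then have "(\<integral>r. (norm (V' r + W' r))\<^sup>2 \<partial>lborel) + (\<integral>r. (norm (V' r - W' r))\<^sup>2 \<partial>lborel)
      = 2 * (\<integral>r. (norm (V' r))\<^sup>2 \<partial>lborel) + 2 * (\<integral>r. (norm (W' r))\<^sup>2 \<partial>lborel)"
    by (simp add: parallelogram_law_norm flip: Bochner_Integration.integral_add)
       (simp add: Bochner_Integration.integral_add)
  with True show ?thesis
    by (simp add: Iint_frac_int_zero_inner V'_def W'_def scaleR_add_right scaleR_diff_right)
next
  case False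
  with assms have "0 < b"
    by simp
  have "sq_integrable_supported t (\<lambda>r. indicator {0..t} r *\<^sub>R (v r + w r))"
    "sq_integrable_supported t (\<lambda>r. indicator {0..t} r *\<^sub>R (v r - w r))"
    using sq_integrable_supported_add_diff[OF V W] by (simp_all add: scaleR_add_right scaleR_diff_right)
  note Iint_eq = this[THEN Iint_frac_int_inner_eq_frac_form[OF \<open>0 < b\<close>]]
    V[THEN Iint_frac_int_inner_eq_frac_form[OF \<open>0 < b\<close>]] W[THEN Iint_frac_int_inner_eq_frac_form[OF \<open>0 < b\<close>]]
  show ?thesis
    using frac_form_parallelogram[OF \<open>0 < b\<close> V W] by (simp add: Iint_eq scaleR_add_right scaleR_diff_right)
qed

lemma Iint_frac_int_inner_add_le:
  fixes v w :: "real \<Rightarrow> 'a::{real_inner, banach, second_countable_topology}"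
  assumes "0 \<le> b" "b < 1"
    and V: "sq_integrable_supported t (\<lambda>r. indicator {0..t} r *\<^sub>R v r)"
    and W: "sq_integrable_supported t (\<lambda>r. indicator {0..t} r *\<^sub>R w r)"
  shows "Iint (\<lambda>s. frac_int b (\<lambda>r. v r + w r) s \<bullet> (v s + w s)) t
         \<le> 2 * (Iint (\<lambda>s. frac_int b v s \<bullet> v s) t + Iint (\<lambda>s. frac_int b w s \<bullet> w s) t)"
proof -
  have "sq_integrable_supported t (\<lambda>r. indicator {0..t} r *\<^sub>R (v r - w r))"
    using sq_integrable_supported_add_diff(2)[OF V W] by (simp add: scaleR_diff_right)
  then have "0 \<le> Iint (\<lambda>s. frac_int b (\<lambda>r. v r - w r) s \<bullet> (v s - w s)) t"
    by (rule Iint_frac_int_inner_nonneg[OF assms(1,2)])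
  then show ?thesis
    using Iint_frac_int_inner_parallelogram[OF assms(1) V W] by simp
qed

theorem lemma2p2:
  fixes v w :: "real \<Rightarrow> 'a::{real_inner, banach, second_countable_topology}"
    and \<alpha> T t :: real
  assumes "0 < \<alpha>" and "\<alpha> \<le> 1"
    and "set_borel_measurable lborel {0..T} v"
    and "set_borel_measurable lborel {0..T} w"
    and "set_integrable lborel {0..T} (\<lambda>s. (norm (v s))\<^sup>2)"
    and "set_integrable lborel {0..T} (\<lambda>s. (norm (w s))\<^sup>2)"
    and "0 \<le> t" and "t \<le> T"
  shows "Iint (\<lambda>s. frac_int (1 - \<alpha>) (\<lambda>r. v r + w r) s \<bullet> (v s + w s)) t
         \<le> (1 + 1 / \<alpha>) * (Iint (\<lambda>s. frac_int (1 - \<alpha>) v s \<bullet> v s) t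
                           + Iint (\<lambda>s. frac_int (1 - \<alpha>) w s \<bullet> w s) t)"
proof -
  have b: "0 \<le> 1 - \<alpha>" "1 - \<alpha> < 1"
    using assms(1,2) by simp_all
  have V: "sq_integrable_supported t (\<lambda>r. indicator {0..t} r *\<^sub>R v r)"
    using assms(8,3,5) by (rule sq_integrable_supported_restrict)
  have W: "sq_integrable_supported t (\<lambda>r. indicator {0..t} r *\<^sub>R w r)"
    using assms(8,4,6) by (rule sq_integrable_supported_restrict)
  have "2 \<le> 1 + 1 / \<alpha>"
    using assms(1,2) by simp
  then have "2 * (Iint (\<lambda>s. frac_int (1 - \<alpha>) v s \<bullet> v s) t + Iint (\<lambda>s. frac_int (1 - \<alpha>) w s \<bullet> w s) t)
      \<le> (1 + 1 / \<alpha>) * (Iint (\<lambda>s. frac_int (1 - \<alpha>) v s \<bullet> v s) t + Iint (\<lambda>s. frac_int (1 - \<alpha>) w s \<bullet> w s) t)"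
    using Iint_frac_int_inner_nonneg[OF b V] Iint_frac_int_inner_nonneg[OF b W]
    by (intro mult_right_mono) simp_all
  with Iint_frac_int_inner_add_le[OF b V W] show ?thesis
    by linarith
qed

end
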